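(* Consider the model described in the context and suppose the Lipschitz assumption holds. Let $Q$ map each point $z\in\mathbb R^{\mathcal X}$ to a nearest point of $\mathcal Q_n$, i.e. $Q(z)\in\arg\min_{\hat z\in\mathcal Q_n}\|z-\hat z\|_\infty$. Define $\tilde V_{T+1}(\hat z):=0$ for $\hat z\in\mathcal Q_n$ and, for $t=T,\dots,1$ and $\hat z\in\mathcal Q_n$, $$\tilde V_t(\hat z):=\min_{\gamma\in\mathcal G}\Big(\hat c_t(\hat z,\gamma)+\tilde V_{t+1}\big(Q(\hat f_t(\hat z,\gamma))\big)\Big).$$ Let $\psi_t(\hat z)$ be any minimizer of this right-hand side, let $\hat z_1=Q(\mathbb P(x_1=\cdot))$ and $\hat z_{t+1}=Q(\hat f_t(\hat z_t,\psi_t(\hat z_t)))$, and define the fully decentralized strategy $\mathbf g=\{g_t\}_{t=1}^T$ with $u^i_t=g_t(x^i_t)$, $g_t(x):=\psi_t(\hat z_t)(x)$. Then $|J(\mathbf g)-J^\ast|\le\epsilon(n)$ for some $\epsilon(n)\in\mathcal O(1/\sqrt n)$.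
   Context: Fix $n\in\mathbb N$ agents, a horizon $T\in\mathbb N$, finite sets $\mathcal X,\mathcal U,\mathcal W$; $\mathbb N_k=\{1,\dots,k\}$. Let $\mathcal I(\mathcal X)=[0,1]^{\mathcal X}$, $\Delta(\mathcal X)$ the probability vectors on $\mathcal X$, $\mathcal M_n=\{m\in\Delta(\mathcal X): m(x)\in\{0,\tfrac1n,\dots,1\}\}$, and $\mathcal Q_n=\{0,\tfrac1n,\dots,1\}^{\mathcal X}$. Agent $i\in\mathbb N_n$ has state $x^i_t\in\mathcal X$, action $u^i_t\in\mathcal U$; mean-field $m_t(x)=\frac1n\sum_i\mathbb 1(x^i_t=x)$. Dynamics $x^i_{t+1}=f_t(x^i_t,u^i_t,w^i_t,m_t)$, $f_t:\mathcal X\times\mathcal U\times\mathcal W\times\mathcal I(\mathcal X)\to\mathcal X$. Initial states i.i.d. with law $\mathbb P(x_1=\cdot)$; for each $t$ the noises $w^1_t,\dots,w^n_t$ are i.i.d. with law $\mathbb P(w_t=\cdot)$; initial states and all noises mutually independent. $\mathbb P(y|x,u,z)=\sum_w\mathbb 1(f_t(x,u,w,z)=y)\mathbb P(w_t=w)$. Costs $\ell_t:\mathcal X\times\mathcal U\times\mathcal I(\mathcal X)\to\mathbb R_{\ge0}$. Lipschitz assumption: constants $K^1_t,K^2_t>0$ with $|\mathbb P(y|x,u,z_1)-\mathbb P(y|x,u,z_2)|\le K^1_t\|z_1-z_2\|_\infty$, $|\ell_t(x,u,z_1)-\ell_t(x,u,z_2)|\le K^2_t\|z_1-z_2\|_\infty$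 for all $x,y,u$, $z_1,z_2\in\mathcal I(\mathcal X)$. Cost of a strategy: $J=\mathbb E[\sum_{t=1}^T\frac1n\sum_i\ell_t(x^i_t,u^i_t,m_t)]$. $J^\ast$ is the optimal cost over mean-field sharing strategies $u^i_t=g_t(x^i_t,m_t)$, $g_t:\mathcal X\times\mathcal M_n\to\mathcal U$. $\mathcal G$ is the set of maps $\gamma:\mathcal X\to\mathcal U$; $\hat f_t(z,\gamma)(y)=\sum_x z(x)\mathbb P(y|x,\gamma(x),z)$, $\hat c_t(z,\gamma)=\sum_x z(x)\ell_t(x,\gamma(x),z)$. Model data do not depend on $n$; $\mathcal O(1/\sqrt n)$ means bounded by $C/\sqrt n$ with $C$ independent of $n$. *)

theory Defs
  imports "HOL-Probability.Probability"
begin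

text \<open>States, actions, noises are finite types 'x, 'u, 'w.
  Elements of R^X (and I(X), Delta(X)) are functions 'x => real. Time indices are 1..T.
  Agents are indexed by 0..<n; a joint state is a function nat => 'x (values outside
  0..<n are irrelevant and fixed to undefined).\<close>

definition linf :: "('x::finite \<Rightarrow> real) \<Rightarrow> real" where
  "linf z = Max (range (\<lambda>x. \<bar>z x\<bar>))"

definition Iset :: "('x \<Rightarrow> real) set" where
  "Iset = {z. \<forall>x. 0 \<le> z x \<and> z x \<le> 1}"

definition Qn :: "nat \<Rightarrow> ('x \<Rightarrow> real) set" where
  "Qn n = {z. \<forall>x. \<exists>k::nat. k \<le> n \<and> z x = real k / real n}"

definition mfield :: "nat \<Rightarrow> (nat \<Rightarrow> 'x) \<Rightarrow> ('x \<Rightarrow> real)" where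
  "mfield n xs = (\<lambda>x. real (card {i\<in>{..<n}. xs i = x}) / real n)"

definition Ptr :: "(nat \<Rightarrow> 'x \<Rightarrow> 'u \<Rightarrow> 'w \<Rightarrow> ('x \<Rightarrow> real) \<Rightarrow> 'x) \<Rightarrow> (nat \<Rightarrow> 'w::finite pmf)
    \<Rightarrow> nat \<Rightarrow> 'x \<Rightarrow> 'u \<Rightarrow> ('x \<Rightarrow> real) \<Rightarrow> 'x \<Rightarrow> real" where
  "Ptr f pw t x u z y = (\<Sum>w\<in>UNIV. (if f t x u w z = y then 1 else 0) * pmf (pw t) w)"

definition fhat :: "(nat \<Rightarrow> 'x \<Rightarrow> 'u \<Rightarrow> 'w \<Rightarrow> ('x \<Rightarrow> real) \<Rightarrow> 'x) \<Rightarrow> (nat \<Rightarrow> 'w::finite pmf)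
    \<Rightarrow> nat \<Rightarrow> ('x::finite \<Rightarrow> real) \<Rightarrow> ('x \<Rightarrow> 'u) \<Rightarrow> ('x \<Rightarrow> real)" where
  "fhat f pw t z \<gamma> = (\<lambda>y. \<Sum>x\<in>UNIV. z x * Ptr f pw t x (\<gamma> x) z y)"

definition chat :: "(nat \<Rightarrow> 'x \<Rightarrow> 'u \<Rightarrow> ('x \<Rightarrow> real) \<Rightarrow> real)
    \<Rightarrow> nat \<Rightarrow> ('x::finite \<Rightarrow> real) \<Rightarrow> ('x \<Rightarrow> 'u) \<Rightarrow> real" where
  "chat l t z \<gamma> = (\<Sum>x\<in>UNIV. z x * l t x (\<gamma> x) z)"

text \<open>Law of the joint state. sdist ... k is the law of (x^i_{k+1})_{i<n} under the
  mean-field sharing strategy g (u^i_t = g t (x^i_t) m_t).\<close>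
fun sdist :: "nat \<Rightarrow> 'x pmf \<Rightarrow> (nat \<Rightarrow> 'w pmf) \<Rightarrow> (nat \<Rightarrow> 'x \<Rightarrow> 'u \<Rightarrow> 'w \<Rightarrow> ('x \<Rightarrow> real) \<Rightarrow> 'x)
    \<Rightarrow> (nat \<Rightarrow> 'x \<Rightarrow> ('x \<Rightarrow> real) \<Rightarrow> 'u) \<Rightarrow> nat \<Rightarrow> (nat \<Rightarrow> 'x) pmf" where
  "sdist n p1 pw f g 0 = Pi_pmf {..<n} undefined (\<lambda>_. p1)"
| "sdist n p1 pw f g (Suc k) =
     bind_pmf (sdist n p1 pw f g k) (\<lambda>xs.
       map_pmf (\<lambda>ws i. if i < n
                        then f (Suc k) (xs i) (g (Suc k) (xs i) (mfield n xs)) (ws i) (mfield n xs)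
                        else undefined)
               (Pi_pmf {..<n} undefined (\<lambda>_. pw (Suc k))))"

definition Jcost :: "nat \<Rightarrow> nat \<Rightarrow> 'x pmf \<Rightarrow> (nat \<Rightarrow> 'w pmf)
    \<Rightarrow> (nat \<Rightarrow> 'x \<Rightarrow> 'u \<Rightarrow> 'w \<Rightarrow> ('x \<Rightarrow> real) \<Rightarrow> 'x) \<Rightarrow> (nat \<Rightarrow> 'x \<Rightarrow> 'u \<Rightarrow> ('x \<Rightarrow> real) \<Rightarrow> real)
    \<Rightarrow> (nat \<Rightarrow> 'x \<Rightarrow> ('x \<Rightarrow> real) \<Rightarrow> 'u) \<Rightarrow> real" where
  "Jcost T n p1 pw f l g =
     (\<Sum>t\<in>{1..T}. measure_pmf.expectation (sdist n p1 pw f g (t - 1))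
        (\<lambda>xs. (1 / real n) * (\<Sum>i<n. l t (xs i) (g t (xs i) (mfield n xs)) (mfield n xs))))"

text \<open>Optimal cost over all mean-field sharing strategies u^i_t = g_t(x^i_t, m_t).\<close>
definition Jstar :: "nat \<Rightarrow> nat \<Rightarrow> 'x pmf \<Rightarrow> (nat \<Rightarrow> 'w pmf)
    \<Rightarrow> (nat \<Rightarrow> 'x \<Rightarrow> 'u \<Rightarrow> 'w \<Rightarrow> ('x \<Rightarrow> real) \<Rightarrow> 'x) \<Rightarrow> (nat \<Rightarrow> 'x \<Rightarrow> 'u \<Rightarrow> ('x \<Rightarrow> real) \<Rightarrow> real)
    \<Rightarrow> real" where
  "Jstar T n p1 pw f l = (INF g. Jcost T n p1 pw f l g)"

end

theory Submission
  imports Defs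
begin

text \<open>
  The fully decentralized strategy is compared with the value \<open>V 1 (zh 1)\<close> of the quantized
  dynamic program. Empirical distributions of \<open>n\<close> independent agents concentrate around their
  mean at rate \<open>1/\<surd>n\<close> (a second moment bound), and \<open>chat\<close>, \<open>fhat\<close> are Lipschitz in the mean
  field. Hence \<open>V t\<close> evaluated at an empirical mean field differs from \<open>V t\<close> at a nearby
  quantized point by a Lipschitz term plus \<open>O(1/\<surd>n)\<close> (backward induction), and one step of the
  dynamic program dominates one step of any mean-field sharing strategy up to \<open>O(1/\<surd>n)\<close>;
  telescoping gives \<open>V 1 (zh 1) \<le> J(g) + O(1/\<surd>n)\<close> for every \<open>g\<close>. Conversely, under the
  decentralized strategy the empirical mean field tracks the deterministic trajectory \<open>zh\<close> up to
  \<open>O(1/\<surd>n)\<close> in expectation, so its cost is at most \<open>V 1 (zh 1) + O(1/\<surd>n)\<close>.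
\<close>


section \<open>Expectations over probability mass functions\<close>

lemma integrable_measure_pmf_bounded:
  fixes F :: "'a \<Rightarrow> real"
  assumes "\<And>x. \<bar>F x\<bar> \<le> B"
  shows "integrable (measure_pmf p) F"
  by (rule measure_pmf.integrable_const_bound[where B=B]) (use assms in auto)

lemma expectation_bounds:
  fixes F :: "'a \<Rightarrow> real"
  assumes "\<And>x. a \<le> F x" "\<And>x. F x \<le> b"
  shows "a \<le> measure_pmf.expectation p F" "measure_pmf.expectation p F \<le> b"
proof -
  have "integrable (measure_pmf p) F"
    using assms by (intro integrable_measure_pmf_bounded[of _ "\<bar>a\<bar> + \<bar>b\<bar>"]) (smt (verit))
  then show "a \<le> measure_pmf.expectation p F" "measure_pmf.expectation p F \<le> b"
    using assms by (auto intro!: measure_pmf.integral_ge_const measure_pmf.integral_le_const)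
qed

lemma abs_centered_le_1:
  fixes b :: "'a \<Rightarrow> real"
  assumes "\<And>x. 0 \<le> b x" "\<And>x. b x \<le> 1"
  shows "\<bar>b x - measure_pmf.expectation p b\<bar> \<le> 1"
  using expectation_bounds[of 0 b 1 p, OF assms] assms[of x] by (simp add: abs_le_iff)

lemma expectation_mono_finite:
  fixes F G :: "'a \<Rightarrow> real"
  assumes "finite (set_pmf p)" "\<And>x. F x \<le> G x"
  shows "measure_pmf.expectation p F \<le> measure_pmf.expectation p G"
  using assms by (intro integral_mono) (auto intro: integrable_measure_pmf_finite)

lemma expectation_affine_finite:
  fixes F :: "'a \<Rightarrow> real"
  assumes "finite (set_pmf p)"
  shows "measure_pmf.expectation p (\<lambda>x. a + c * F x) = a + c * measure_pmf.expectation p F"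
  using assms by (simp add: integrable_measure_pmf_finite)

lemma exists_in_support_le_expectation:
  fixes F :: "'a \<Rightarrow> real"
  assumes "integrable (measure_pmf p) F" "measure_pmf.expectation p F \<le> c"
  shows "\<exists>x\<in>set_pmf p. F x \<le> c"
proof (rule ccontr)
  assume "\<not> ?thesis"
  then have "AE x in measure_pmf p. c < F x"
    by (auto intro!: AE_pmfI)
  then have "measure_pmf.expectation p (\<lambda>_. c) < measure_pmf.expectation p F"
    using assms(1) by (intro measure_pmf.integral_less_AE_space) (auto simp: measure_pmf.emeasure_space_1)
  with assms(2) show False
    by simp
qed

lemma expectation_bind_pmf_finite:
  fixes F :: "'b \<Rightarrow> real"
  assumes fin: "finite (set_pmf (bind_pmf M N))"
  shows "measure_pmf.expectation (bind_pmf M N) F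
       = measure_pmf.expectation M (\<lambda>x. measure_pmf.expectation (N x) F)"
proof -
  \<comment> \<open>Truncated outside the finite support, \<open>F\<close> becomes bounded, as \<open>integral_bind\<close> requires.\<close>
  let ?S = "set_pmf (bind_pmf M N)"
  define F' where "F' y = (if y \<in> ?S then F y else 0)" for y
  have F'_bound: "\<bar>F' y\<bar> \<le> (\<Sum>y\<in>?S. \<bar>F y\<bar>)" for y
    using member_le_sum[of y ?S "\<lambda>y. \<bar>F y\<bar>"] fin by (auto simp: F'_def intro: sum_nonneg)
  have "measure_pmf.expectation (bind_pmf M N) F = measure_pmf.expectation (bind_pmf M N) F'"
    by (intro integral_cong_AE) (auto simp: F'_def AE_measure_pmf_iff)
  also have "\<dots> = measure_pmf.expectation M (\<lambda>x. measure_pmf.expectation (N x) F')"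
    unfolding measure_pmf_bind
    by (rule integral_bind[where K="count_space UNIV" and B'=1, OF _ F'_bound])
      (auto simp: measure_pmf_in_subprob_algebra measure_pmf.finite_measure_axioms
        intro!: measure_pmf.emeasure_space_le_1)
  also have "\<dots> = measure_pmf.expectation M (\<lambda>x. measure_pmf.expectation (N x) F)"
  proof -
    have "measure_pmf.expectation (N x) F' = measure_pmf.expectation (N x) F" if "x \<in> set_pmf M" for x
      using that by (auto simp: F'_def set_bind_pmf intro!: integral_cong_AE AE_pmfI)
    then have "AE x in M. measure_pmf.expectation (N x) F' = measure_pmf.expectation (N x) F"
      by (simp add: AE_measure_pmf_iff)
    then show ?thesis
      by (rule integral_cong_AE[rotated 2]) simp_all
  qed
  finally show ?thesis .
qed

lemma finite_set_pmf_Pi_pmf: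
  "finite A \<Longrightarrow> finite (set_pmf (Pi_pmf A d (q :: _ \<Rightarrow> 'a::finite pmf)))"
  by (simp add: set_Pi_pmf finite_PiE_dflt)

lemma expectation_Pi_pmf_component:
  fixes h :: "'a \<Rightarrow> real"
  assumes "finite A" "i \<in> A"
  shows "measure_pmf.expectation (Pi_pmf A d q) (\<lambda>ws. h (ws i)) = measure_pmf.expectation (q i) h"
proof -
  have "measure_pmf.expectation (Pi_pmf A d q) (\<lambda>ws. h (ws i))
      = measure_pmf.expectation (map_pmf (\<lambda>ws. ws i) (Pi_pmf A d q)) h"
    by simp
  also have "map_pmf (\<lambda>ws. ws i) (Pi_pmf A d q) = q i"
    using Pi_pmf_component[OF assms(1), of i d q] assms(2) by simp
  finally show ?thesis .
qed

lemma expectation_Pi_pmf_mult_components: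
  fixes b c :: "'a \<Rightarrow> real"
  assumes A: "finite A" "i \<in> A" "j \<in> A" "i \<noteq> j"
    and nonneg: "\<And>x. 0 \<le> b x" "\<And>x. 0 \<le> c x"
    and int: "integrable (measure_pmf (q i)) b" "integrable (measure_pmf (q j)) c"
  shows "measure_pmf.expectation (Pi_pmf A d q) (\<lambda>ws. b (ws i) * c (ws j))
       = measure_pmf.expectation (q i) b * measure_pmf.expectation (q j) c"
proof -
  define F where "F k = (if k = i then b else if k = j then c else (\<lambda>_. 1))" for k
  have prod_F: "(\<Prod>k\<in>A. G (F k) k) = G b i * G c j"
    if "\<And>k. G (\<lambda>_. 1) k = 1" for G :: "('a \<Rightarrow> real) \<Rightarrow> _ \<Rightarrow> real"
  proof -
    have "(\<Prod>k\<in>A. G (F k) k) = (\<Prod>k\<in>{i, j}. G (F k) k)"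
      by (rule prod.mono_neutral_right) (use A that in \<open>auto simp: F_def\<close>)
    then show ?thesis using A(4) by (simp add: F_def)
  qed
  have "measure_pmf.expectation (Pi_pmf A d q) (\<lambda>ws. b (ws i) * c (ws j))
      = measure_pmf.expectation (Pi_pmf A d q) (\<lambda>ws. \<Prod>k\<in>A. F k (ws k))"
    using prod_F[of "\<lambda>h k. h (_ k)"] by simp
  also have "\<dots> = (\<Prod>k\<in>A. measure_pmf.expectation (q k) (F k))"
    by (rule expectation_prod_Pi_pmf) (auto simp: F_def A(1) nonneg int)
  also have "\<dots> = measure_pmf.expectation (q i) b * measure_pmf.expectation (q j) c"
    using prod_F[of "\<lambda>h k. measure_pmf.expectation (q k) h"] by simp
  finally show ?thesis .
qed

lemma expectation_Pi_pmf_centered_mult: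
  fixes b c :: "'a \<Rightarrow> real"
  assumes A: "finite A" "i \<in> A" "j \<in> A" "i \<noteq> j"
    and b: "\<And>x. 0 \<le> b x" "\<And>x. b x \<le> 1" and c: "\<And>x. 0 \<le> c x" "\<And>x. c x \<le> 1"
  shows "measure_pmf.expectation (Pi_pmf A d q)
      (\<lambda>ws. (b (ws i) - measure_pmf.expectation (q i) b) * (c (ws j) - measure_pmf.expectation (q j) c)) = 0"
proof -
  let ?P = "Pi_pmf A d q"
  define \<beta> where "\<beta> = measure_pmf.expectation (q i) b"
  define \<gamma> where "\<gamma> = measure_pmf.expectation (q j) c"
  have b_int: "integrable (measure_pmf p) b" and c_int: "integrable (measure_pmf p) c" for p
    using b c by (auto intro!: integrable_measure_pmf_bounded[of _ 1] simp: abs_le_iff)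
  have bc_int: "integrable ?P (\<lambda>ws. b (ws i) * c (ws j))"
    using b c by (intro integrable_measure_pmf_bounded[of _ 1]) (simp add: abs_mult mult_le_one)
  have "(\<lambda>ws. (b (ws i) - \<beta>) * (c (ws j) - \<gamma>))
      = (\<lambda>ws. b (ws i) * c (ws j) - \<gamma> * b (ws i) - \<beta> * c (ws j) + \<beta> * \<gamma>)"
    by (auto simp: algebra_simps)
  then have "measure_pmf.expectation ?P (\<lambda>ws. (b (ws i) - \<beta>) * (c (ws j) - \<gamma>))
      = measure_pmf.expectation ?P (\<lambda>ws. b (ws i) * c (ws j))
        - \<gamma> * measure_pmf.expectation ?P (\<lambda>ws. b (ws i))
        - \<beta> * measure_pmf.expectation ?P (\<lambda>ws. c (ws j)) + \<beta> * \<gamma>"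
    using bc_int b_int[of "map_pmf (\<lambda>ws. ws i) ?P"] c_int[of "map_pmf (\<lambda>ws. ws j) ?P"] by simp
  also have "\<dots> = 0"
    using expectation_Pi_pmf_mult_components[OF A b(1) c(1) b_int c_int]
    by (simp add: \<beta>_def \<gamma>_def expectation_Pi_pmf_component[OF A(1,2)]
        expectation_Pi_pmf_component[OF A(1,3)])
  finally show ?thesis by (simp add: \<beta>_def \<gamma>_def)
qed

lemma expectation_centered_sum_sq_le:
  fixes b :: "nat \<Rightarrow> 'a \<Rightarrow> real"
  assumes b0: "\<And>i x. 0 \<le> b i x" and b1: "\<And>i x. b i x \<le> 1"
  shows "measure_pmf.expectation (Pi_pmf {..<n} d q)
           (\<lambda>ws. (\<Sum>i<n. b i (ws i) - measure_pmf.expectation (q i) (b i))\<^sup>2) \<le> real n"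
proof -
  let ?P = "Pi_pmf {..<n} d q"
  define X where "X i ws = b i (ws i) - measure_pmf.expectation (q i) (b i)" for i ws
  have X_bound: "\<bar>X i ws\<bar> \<le> 1" for i ws
    unfolding X_def by (rule abs_centered_le_1[OF b0 b1])
  have XX_bound: "\<bar>X i ws * X j ws\<bar> \<le> 1" for i j ws
    using X_bound[of i ws] X_bound[of j ws] by (simp add: abs_mult mult_le_one)
  have cov: "measure_pmf.expectation ?P (\<lambda>ws. X i ws * X j ws) \<le> (if i = j then 1 else 0)"
    if "i < n" "j < n" for i j
  proof (cases "i = j")
    case True
    then show ?thesis
      using expectation_bounds(2)[of "- 1" "\<lambda>ws. X i ws * X j ws" 1 ?P] XX_bound
      by (simp add: abs_le_iff)
  next
    case False
    then show ?thesis
      using expectation_Pi_pmf_centered_mult[of "{..<n}" i j "b i" "b j"] that b0 b1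
      by (simp add: X_def)
  qed
  have "measure_pmf.expectation ?P (\<lambda>ws. (\<Sum>i<n. X i ws)\<^sup>2)
      = (\<Sum>i<n. \<Sum>j<n. measure_pmf.expectation ?P (\<lambda>ws. X i ws * X j ws))"
    by (simp add: power2_eq_square sum_product integrable_measure_pmf_bounded[OF XX_bound]
        Bochner_Integration.integral_sum)
  also have "\<dots> \<le> (\<Sum>i<n. \<Sum>j<n. if i = j then 1 else 0)"
    by (intro sum_mono cov) auto
  also have "\<dots> = real n"
    by simp
  finally show ?thesis
    by (simp add: X_def)
qed

lemma expectation_abs_le_sqrt_expectation_sq:
  fixes F :: "'a \<Rightarrow> real"
  assumes "\<And>x. \<bar>F x\<bar> \<le> B"
  shows "measure_pmf.expectation p (\<lambda>x. \<bar>F x\<bar>) \<le> sqrt (measure_pmf.expectation p (\<lambda>x. (F x)\<^sup>2))"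
proof -
  have "\<bar>\<bar>F x\<bar>\<^sup>2\<bar> \<le> B\<^sup>2" for x
    using power_mono[OF assms[of x], of 2] by simp
  then have "integrable p (\<lambda>x. \<bar>F x\<bar>)" "integrable p (\<lambda>x. \<bar>F x\<bar>\<^sup>2)"
    using assms by (blast intro: integrable_measure_pmf_bounded)+
  then have "(measure_pmf.expectation p (\<lambda>x. \<bar>F x\<bar>))\<^sup>2 \<le> measure_pmf.expectation p (\<lambda>x. (F x)\<^sup>2)"
    using measure_pmf.variance_positive[of p "\<lambda>x. \<bar>F x\<bar>"] measure_pmf.variance_eq[of p "\<lambda>x. \<bar>F x\<bar>"]
    by simp
  then show ?thesis
    by (simp add: real_le_rsqrt)
qed

lemma abs_centered_sum_le:
  fixes b :: "nat \<Rightarrow> 'a \<Rightarrow> real"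
  assumes "\<And>i x. 0 \<le> b i x" "\<And>i x. b i x \<le> 1"
  shows "\<bar>\<Sum>i<n. b i (ws i) - measure_pmf.expectation (q i) (b i)\<bar> \<le> real n"
proof -
  have "\<bar>\<Sum>i<n. b i (ws i) - measure_pmf.expectation (q i) (b i)\<bar>
      \<le> (\<Sum>i<n. \<bar>b i (ws i) - measure_pmf.expectation (q i) (b i)\<bar>)"
    by (rule sum_abs)
  also have "\<dots> \<le> (\<Sum>i<n. 1)"
    by (intro sum_mono abs_centered_le_1 assms)
  finally show ?thesis
    by simp
qed

lemma expectation_abs_centered_sum_le_sqrt:
  fixes b :: "nat \<Rightarrow> 'a \<Rightarrow> real"
  assumes "\<And>i x. 0 \<le> b i x" "\<And>i x. b i x \<le> 1"
  shows "measure_pmf.expectation (Pi_pmf {..<n} d q)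
      (\<lambda>ws. \<bar>\<Sum>i<n. b i (ws i) - measure_pmf.expectation (q i) (b i)\<bar>) \<le> sqrt (real n)"
proof -
  have "measure_pmf.expectation (Pi_pmf {..<n} d q)
      (\<lambda>ws. \<bar>\<Sum>i<n. b i (ws i) - measure_pmf.expectation (q i) (b i)\<bar>)
    \<le> sqrt (measure_pmf.expectation (Pi_pmf {..<n} d q)
      (\<lambda>ws. (\<Sum>i<n. b i (ws i) - measure_pmf.expectation (q i) (b i))\<^sup>2))"
    by (rule expectation_abs_le_sqrt_expectation_sq[OF abs_centered_sum_le[OF assms]])
  also have "\<dots> \<le> sqrt (real n)"
    by (intro real_sqrt_le_mono expectation_centered_sum_sq_le assms)
  finally show ?thesis .
qed

section \<open>The sup norm\<close>

lemma abs_le_linf: "\<bar>z y\<bar> \<le> linf (z :: 'x::finite \<Rightarrow> real)"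
  unfolding linf_def by (rule Max_ge) auto

lemma linf_leI: "(\<And>y. \<bar>z y\<bar> \<le> c) \<Longrightarrow> linf (z :: 'x::finite \<Rightarrow> real) \<le> c"
  unfolding linf_def by (subst Max_le_iff) auto

lemma linf_nonneg: "0 \<le> linf (z :: 'x::finite \<Rightarrow> real)"
  using abs_le_linf[of z undefined] by simp

lemma linf_le_sum_abs: "linf (z :: 'x::finite \<Rightarrow> real) \<le> (\<Sum>y\<in>UNIV. \<bar>z y\<bar>)"
  by (rule linf_leI) (rule member_le_sum, auto)

lemma linf_minus_commute: "linf ((a :: 'x::finite \<Rightarrow> real) - b) = linf (b - a)"
  by (simp add: linf_def fun_diff_def abs_minus_commute)

lemma linf_triangle: "linf ((a :: 'x::finite \<Rightarrow> real) - c) \<le> linf (a - b) + linf (b - c)"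
proof (rule linf_leI)
  fix y
  have "\<bar>a y - c y\<bar> \<le> \<bar>a y - b y\<bar> + \<bar>b y - c y\<bar>"
    by simp
  also have "\<dots> \<le> linf (a - b) + linf (b - c)"
    using abs_le_linf[of "a - b" y] abs_le_linf[of "b - c" y] by simp
  finally show "\<bar>(a - c) y\<bar> \<le> linf (a - b) + linf (b - c)"
    by simp
qed

lemma linf_le_twice_of_nearer:
  assumes "linf (z - q) \<le> linf (z - m)"
  shows "linf ((q :: 'x::finite \<Rightarrow> real) - m) \<le> 2 * linf (z - m)"
  using linf_triangle[of q m z] linf_minus_commute[of q z] assms by linarith

lemma linf_diff_Iset_le_1: "a \<in> Iset \<Longrightarrow> b \<in> Iset \<Longrightarrow> linf ((a :: 'x::finite \<Rightarrow> real) - b) \<le> 1"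
  unfolding Iset_def by (rule linf_leI) (smt (verit) mem_Collect_eq minus_apply)

lemma expectation_linf_le_sum_expectation_abs:
  fixes S :: "'x::finite \<Rightarrow> 'a \<Rightarrow> real"
  assumes bound: "\<And>y w. \<bar>S y w\<bar> \<le> B"
  shows "measure_pmf.expectation p (\<lambda>w. linf (\<lambda>y. S y w))
    \<le> (\<Sum>y\<in>UNIV. measure_pmf.expectation p (\<lambda>w. \<bar>S y w\<bar>))"
proof -
  have "measure_pmf.expectation p (\<lambda>w. linf (\<lambda>y. S y w))
      \<le> measure_pmf.expectation p (\<lambda>w. \<Sum>y\<in>UNIV. \<bar>S y w\<bar>)"
  proof (rule integral_mono)
    have "\<bar>linf (\<lambda>y. S y w)\<bar> \<le> B" for w
      using linf_nonneg[of "\<lambda>y. S y w"] linf_leI[of "\<lambda>y. S y w" B] bound by simp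
    then show "integrable p (\<lambda>w. linf (\<lambda>y. S y w))"
      by (rule integrable_measure_pmf_bounded)
    show "integrable p (\<lambda>w. \<Sum>y\<in>UNIV. \<bar>S y w\<bar>)"
      using bound by (intro Bochner_Integration.integrable_sum integrable_measure_pmf_bounded[of _ B]) simp
  qed (rule linf_le_sum_abs)
  also have "\<dots> = (\<Sum>y\<in>UNIV. measure_pmf.expectation p (\<lambda>w. \<bar>S y w\<bar>))"
    using bound by (intro Bochner_Integration.integral_sum integrable_measure_pmf_bounded[of _ B]) simp
  finally show ?thesis .
qed

lemma weighted_sum_lipschitz:
  fixes z1 z2 a1 a2 :: "'x::finite \<Rightarrow> real"
  assumes a1: "\<And>x. \<bar>a1 x\<bar> \<le> A" and a12: "\<And>x. \<bar>a1 x - a2 x\<bar> \<le> K * linf (z1 - z2)"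
    and z2: "z2 \<in> Iset"
  shows "\<bar>(\<Sum>x\<in>UNIV. z1 x * a1 x) - (\<Sum>x\<in>UNIV. z2 x * a2 x)\<bar> \<le> real CARD('x) * (A + K) * linf (z1 - z2)"
proof -
  let ?d = "linf (z1 - z2)"
  have "\<bar>z1 x * a1 x - z2 x * a2 x\<bar> \<le> (A + K) * ?d" for x
  proof -
    have "z1 x * a1 x - z2 x * a2 x = (z1 x - z2 x) * a1 x + z2 x * (a1 x - a2 x)"
      by (simp add: algebra_simps)
    moreover have "\<bar>(z1 x - z2 x) * a1 x\<bar> \<le> ?d * A"
      unfolding abs_mult using abs_le_linf[of "z1 - z2" x] a1[of x]
      by (intro mult_mono) (auto simp: linf_nonneg)
    moreover have "\<bar>z2 x * (a1 x - a2 x)\<bar> \<le> 1 * (K * ?d)"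
      unfolding abs_mult using z2 a12[of x]
      by (intro mult_mono) (auto simp: Iset_def)
    ultimately show ?thesis
      by (simp add: algebra_simps)
  qed
  then have "\<bar>\<Sum>x\<in>UNIV. z1 x * a1 x - z2 x * a2 x\<bar> \<le> (\<Sum>x\<in>(UNIV :: 'x set). (A + K) * ?d)"
    by (intro order_trans[OF sum_abs] sum_mono)
  then show ?thesis
    by (simp add: sum_subtractf)
qed

lemma abs_le_of_lipschitz_on_Iset:
  fixes h :: "('x::finite \<Rightarrow> real) \<Rightarrow> real"
  assumes lip: "\<And>z1 z2. z1 \<in> Iset \<Longrightarrow> z2 \<in> Iset \<Longrightarrow> \<bar>h z1 - h z2\<bar> \<le> K * linf (z1 - z2)"
    and K: "0 \<le> K" and z: "z \<in> Iset"
  shows "\<bar>h z\<bar> \<le> \<bar>h (\<lambda>_. 0)\<bar> + K"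
proof -
  have zero: "(\<lambda>_. 0) \<in> Iset"
    by (simp add: Iset_def)
  have "\<bar>h z - h (\<lambda>_. 0)\<bar> \<le> K * 1"
    using lip[OF z zero] mult_left_mono[OF linf_diff_Iset_le_1[OF z zero] K] by linarith
  then show ?thesis
    by linarith
qed

section \<open>Empirical mean fields\<close>

lemma Qn_in_Iset:
  assumes "z \<in> Qn n"
  shows "z \<in> Iset"
proof -
  have "0 \<le> z x \<and> z x \<le> 1" for x
  proof -
    obtain k :: nat where "k \<le> n" "z x = real k / real n"
      using assms by (auto simp: Qn_def)
    then show ?thesis
      by (cases "n = 0") simp_all
  qed
  then show ?thesis
    by (simp add: Iset_def)
qed

lemma mfield_in_Qn: "mfield n xs \<in> Qn n"
proof -
  have "card {i\<in>{..<n}. xs i = x} \<le> n" for x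
    using card_mono[of "{..<n}" "{i\<in>{..<n}. xs i = x}"] by auto
  then show ?thesis
    unfolding Qn_def mfield_def by blast
qed

lemma mfield_in_Iset: "mfield n xs \<in> Iset"
  by (rule Qn_in_Iset[OF mfield_in_Qn])

lemma mfield_cong:
  assumes "\<And>i. i < n \<Longrightarrow> xs i = ys i"
  shows "mfield n xs = mfield n ys"
proof -
  have "{i\<in>{..<n}. xs i = x} = {i\<in>{..<n}. ys i = x}" for x
    using assms by auto
  then show ?thesis
    by (simp add: mfield_def)
qed

lemma mfield_eq_sum: "mfield n xs y = (\<Sum>i<n. if xs i = y then 1 else 0) / real n"
  by (simp add: mfield_def sum.If_cases Int_def)

lemma sum_agents_eq_sum_mfield:
  fixes h :: "'x::finite \<Rightarrow> real"
  shows "(\<Sum>i<n. h (xs i)) / real n = (\<Sum>x\<in>UNIV. mfield n xs x * h x)"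
proof -
  have "(\<Sum>i<n. h (xs i)) = (\<Sum>i<n. \<Sum>x\<in>UNIV. if xs i = x then h x else 0)"
    by simp
  also have "\<dots> = (\<Sum>x\<in>UNIV. (\<Sum>i<n. if xs i = x then 1 else 0) * h x)"
    by (subst sum.swap) (auto simp: sum_distrib_right intro!: sum.cong)
  finally show ?thesis
    by (simp add: mfield_eq_sum sum_divide_distrib[where A=UNIV])
qed

lemma Ptr_eq_prob: "Ptr f pw t x u z y = measure_pmf.prob (pw t) {w. f t x u w z = y}"
proof -
  have "Ptr f pw t x u z y = (\<Sum>w\<in>UNIV. if f t x u w z = y then pmf (pw t) w else 0)"
    unfolding Ptr_def by (rule sum.cong) auto
  then show ?thesis
    by (simp add: sum.If_cases measure_measure_pmf_finite)
qed

lemma expectation_linf_mfield_deviation: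
  fixes \<phi> :: "nat \<Rightarrow> 'a \<Rightarrow> 'x::finite"
  shows "measure_pmf.expectation (Pi_pmf {..<n} d q)
      (\<lambda>ws. linf (mfield n (\<lambda>i. \<phi> i (ws i))
                   - (\<lambda>y. (\<Sum>i<n. measure_pmf.prob (q i) {w. \<phi> i w = y}) / real n)))
    \<le> real CARD('x) / sqrt (real n)"
proof -
  let ?P = "Pi_pmf {..<n} d q"
  define b where "b y i w = (if \<phi> i w = y then 1 else 0 :: real)" for y i w
  define S where "S y ws = (\<Sum>i<n. b y i (ws i) - measure_pmf.expectation (q i) (b y i)) / real n" for y ws
  have b_bounds: "0 \<le> b y i w" "b y i w \<le> 1" for y i w
    by (simp_all add: b_def)
  have "measure_pmf.expectation (q i) (b y i) = measure_pmf.prob (q i) {w. \<phi> i w = y}" for y i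
  proof -
    have "b y i = indicator {w. \<phi> i w = y}"
      by (auto simp: b_def fun_eq_iff)
    then show ?thesis
      by simp
  qed
  then have deviation: "mfield n (\<lambda>i. \<phi> i (ws i))
        - (\<lambda>y. (\<Sum>i<n. measure_pmf.prob (q i) {w. \<phi> i w = y}) / real n) = (\<lambda>y. S y ws)" for ws
    by (auto simp: mfield_eq_sum S_def b_def sum_subtractf diff_divide_distrib)
  have S_bound: "\<bar>S y ws\<bar> \<le> 1" for y ws
    using abs_centered_sum_le[where b="b y" and q=q and ws=ws and n=n, OF b_bounds]
    by (cases "n = 0") (simp_all add: S_def divide_le_eq_1)
  have E_abs_S: "measure_pmf.expectation ?P (\<lambda>ws. \<bar>S y ws\<bar>) \<le> sqrt (real n) / real n" for y
    using expectation_abs_centered_sum_le_sqrt[where b="b y" and n=n and d=d and q=q, OF b_bounds]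
    by (simp add: S_def divide_right_mono)
  have "measure_pmf.expectation ?P (\<lambda>ws. linf (\<lambda>y. S y ws))
      \<le> (\<Sum>y\<in>UNIV. measure_pmf.expectation ?P (\<lambda>ws. \<bar>S y ws\<bar>))"
    by (rule expectation_linf_le_sum_expectation_abs[OF S_bound])
  also have "\<dots> \<le> (\<Sum>y\<in>(UNIV :: 'x set). sqrt (real n) / real n)"
    by (intro sum_mono E_abs_S)
  also have "\<dots> = real CARD('x) / sqrt (real n)"
    using sqrt_divide_self_eq[of "real n"] by (simp add: divide_inverse)
  finally show ?thesis
    by (simp add: deviation)
qed

definition next_state :: "nat \<Rightarrow> (nat \<Rightarrow> 'x \<Rightarrow> 'u \<Rightarrow> 'w \<Rightarrow> ('x \<Rightarrow> real) \<Rightarrow> 'x) \<Rightarrow> nat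
    \<Rightarrow> ('x \<Rightarrow> 'u) \<Rightarrow> (nat \<Rightarrow> 'x) \<Rightarrow> (nat \<Rightarrow> 'w) \<Rightarrow> nat \<Rightarrow> 'x" where
  "next_state n f t \<gamma> xs ws =
     (\<lambda>i. if i < n then f t (xs i) (\<gamma> (xs i)) (ws i) (mfield n xs) else undefined)"

abbreviation noise :: "nat \<Rightarrow> (nat \<Rightarrow> 'w pmf) \<Rightarrow> nat \<Rightarrow> (nat \<Rightarrow> 'w) pmf" where
  "noise n pw t \<equiv> Pi_pmf {..<n} undefined (\<lambda>_. pw t)"

lemma sdist_Suc_next_state:
  "sdist n p1 pw f g (Suc k) = bind_pmf (sdist n p1 pw f g k) (\<lambda>xs.
     map_pmf (next_state n f (Suc k) (\<lambda>x. g (Suc k) x (mfield n xs)) xs) (noise n pw (Suc k)))"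
  by (simp add: next_state_def[abs_def])

lemma finite_set_pmf_sdist:
  fixes p1 :: "'x::finite pmf" and pw :: "nat \<Rightarrow> 'w::finite pmf"
  shows "finite (set_pmf (sdist n p1 pw f g k))"
  by (induction k) (simp_all add: finite_set_pmf_Pi_pmf del: sdist.simps(2)
      add: sdist_Suc_next_state)

lemma expectation_sdist_Suc:
  fixes p1 :: "'x::finite pmf" and pw :: "nat \<Rightarrow> 'w::finite pmf" and F :: "(nat \<Rightarrow> 'x) \<Rightarrow> real"
  shows "measure_pmf.expectation (sdist n p1 pw f g (Suc k)) F
    = measure_pmf.expectation (sdist n p1 pw f g k) (\<lambda>xs.
        measure_pmf.expectation (noise n pw (Suc k))
          (\<lambda>ws. F (next_state n f (Suc k) (\<lambda>x. g (Suc k) x (mfield n xs)) xs ws)))"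
  using expectation_bind_pmf_finite[OF finite_set_pmf_sdist[of n p1 pw f g "Suc k", unfolded sdist_Suc_next_state]]
  by (simp add: sdist_Suc_next_state del: sdist.simps(2))

lemma expectation_sdist_Suc_le:
  fixes p1 :: "'x::finite pmf" and pw :: "nat \<Rightarrow> 'w::finite pmf" and F G :: "(nat \<Rightarrow> 'x) \<Rightarrow> real"
  assumes "\<And>xs. measure_pmf.expectation (noise n pw (Suc k))
      (\<lambda>ws. F (next_state n f (Suc k) (\<lambda>x. g (Suc k) x (mfield n xs)) xs ws)) \<le> G xs"
  shows "measure_pmf.expectation (sdist n p1 pw f g (Suc k)) F
       \<le> measure_pmf.expectation (sdist n p1 pw f g k) G"
  unfolding expectation_sdist_Suc by (intro expectation_mono_finite finite_set_pmf_sdist assms)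

lemma expectation_linf_next_state_deviation:
  fixes f :: "nat \<Rightarrow> 'x::finite \<Rightarrow> 'u \<Rightarrow> 'w::finite \<Rightarrow> ('x \<Rightarrow> real) \<Rightarrow> 'x"
  shows "measure_pmf.expectation (noise n pw t)
      (\<lambda>ws. linf (mfield n (next_state n f t \<gamma> xs ws) - fhat f pw t (mfield n xs) \<gamma>))
    \<le> real CARD('x) / sqrt (real n)"
proof -
  define \<phi> where "\<phi> i w = f t (xs i) (\<gamma> (xs i)) w (mfield n xs)" for i w
  have "mfield n (next_state n f t \<gamma> xs ws) = mfield n (\<lambda>i. \<phi> i (ws i))" for ws
    by (rule mfield_cong) (simp add: next_state_def \<phi>_def)
  moreover have "fhat f pw t (mfield n xs) \<gamma>
      = (\<lambda>y. (\<Sum>i<n. measure_pmf.prob (pw t) {w. \<phi> i w = y}) / real n)"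
    using sum_agents_eq_sum_mfield[where h="\<lambda>x. Ptr f pw t x (\<gamma> x) (mfield n xs) _" and n=n and xs=xs]
    by (auto simp: fhat_def Ptr_eq_prob \<phi>_def)
  ultimately show ?thesis
    using expectation_linf_mfield_deviation[of n undefined "\<lambda>_. pw t" \<phi>] by simp
qed

lemma expectation_linf_initial_deviation:
  fixes p1 :: "'x::finite pmf"
  assumes "n \<ge> 1"
  shows "measure_pmf.expectation (Pi_pmf {..<n} undefined (\<lambda>_. p1)) (\<lambda>xs. linf (mfield n xs - pmf p1))
    \<le> real CARD('x) / sqrt (real n)"
proof -
  have "pmf p1 = (\<lambda>y. (\<Sum>i<n. measure_pmf.prob p1 {w. w = y}) / real n)"
    using assms by (simp add: measure_pmf_single)
  then show ?thesis
    using expectation_linf_mfield_deviation[of n undefined "\<lambda>_. p1" "\<lambda>_ w. w"] by simp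
qed

lemma exists_mfield_near_fhat:
  fixes f :: "nat \<Rightarrow> 'x::finite \<Rightarrow> 'u \<Rightarrow> 'w::finite \<Rightarrow> ('x \<Rightarrow> real) \<Rightarrow> 'x"
  shows "\<exists>xs'. linf (mfield n xs' - fhat f pw t (mfield n xs) \<gamma>) \<le> real CARD('x) / sqrt (real n)"
  using exists_in_support_le_expectation[OF
      integrable_measure_pmf_finite[OF finite_set_pmf_Pi_pmf] expectation_linf_next_state_deviation]
  by blast

lemma Jcost_eq_sum_chat:
  "Jcost T n p1 pw f l g = (\<Sum>t\<in>{1..T}. measure_pmf.expectation (sdist n p1 pw f g (t - 1))
      (\<lambda>xs. chat l t (mfield n xs) (\<lambda>x. g t x (mfield n xs))))"
  unfolding Jcost_def chat_def
  by (simp add: sum_agents_eq_sum_mfield[where h="\<lambda>x. l _ x (g _ x (mfield n _)) (mfield n _)", symmetric])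

lemma Jcost_nonneg:
  assumes "\<And>t x u z. 0 \<le> l t x u z"
  shows "0 \<le> Jcost T n p1 pw f l g"
  unfolding Jcost_def using assms
  by (intro sum_nonneg Bochner_Integration.integral_nonneg mult_nonneg_nonneg) auto

lemma Jstar_le_Jcost:
  assumes "\<And>t x u z. 0 \<le> l t x u z"
  shows "Jstar T n p1 pw f l \<le> Jcost T n p1 pw f l g"
  unfolding Jstar_def using Jcost_nonneg[OF assms]
  by (intro cINF_lower bdd_belowI[of _ 0]) auto

lemma le_Jstar:
  assumes "\<And>g. c \<le> Jcost T n p1 pw f l g"
  shows "c \<le> Jstar T n p1 pw f l"
  unfolding Jstar_def using assms by (intro cINF_greatest) auto

section \<open>Lipschitz constants of the model\<close>

lemma ex_uniform_constant:
  fixes P :: "'a \<Rightarrow> real \<Rightarrow> bool"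
  assumes "finite A" "\<forall>t\<in>A. \<exists>K>0. P t K" "\<And>t K K'. P t K \<Longrightarrow> K \<le> K' \<Longrightarrow> P t K'"
  shows "\<exists>K>0. \<forall>t\<in>A. P t K"
proof -
  obtain Kt where Kt: "\<forall>t\<in>A. Kt t > 0 \<and> P t (Kt t)"
    using bchoice[OF assms(2)] by auto
  define K where "K = 1 + (\<Sum>t\<in>A. Kt t)"
  have "Kt t \<le> K" if "t \<in> A" for t
  proof -
    have "Kt t \<le> (\<Sum>t\<in>A. Kt t)"
      by (rule member_le_sum) (use Kt assms(1) that in \<open>auto intro: less_imp_le\<close>)
    then show ?thesis
      by (simp add: K_def)
  qed
  then have "P t K" if "t \<in> A" for t
    using assms(3)[of t "Kt t" K] Kt that by simp
  moreover have "0 \<le> (\<Sum>t\<in>A. Kt t)"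
    using Kt by (intro sum_nonneg) (meson less_imp_le)
  then have "K > 0"
    by (simp add: K_def)
  ultimately show ?thesis
    by blast
qed

locale lipschitz_model =
  fixes T :: nat and pw :: "nat \<Rightarrow> 'w::finite pmf"
    and f :: "nat \<Rightarrow> 'x::finite \<Rightarrow> 'u \<Rightarrow> 'w \<Rightarrow> ('x \<Rightarrow> real) \<Rightarrow> 'x"
    and l :: "nat \<Rightarrow> 'x \<Rightarrow> 'u \<Rightarrow> ('x \<Rightarrow> real) \<Rightarrow> real" and K B :: real
  assumes K_nonneg: "0 \<le> K" and B_nonneg: "0 \<le> B"
    and Ptr_lipschitz: "\<And>t x y u z1 z2. t \<in> {1..T} \<Longrightarrow> z1 \<in> Iset \<Longrightarrow> z2 \<in> Iset \<Longrightarrow>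
        \<bar>Ptr f pw t x u z1 y - Ptr f pw t x u z2 y\<bar> \<le> K * linf (z1 - z2)"
    and cost_lipschitz: "\<And>t x u z1 z2. t \<in> {1..T} \<Longrightarrow> z1 \<in> Iset \<Longrightarrow> z2 \<in> Iset \<Longrightarrow>
        \<bar>l t x u z1 - l t x u z2\<bar> \<le> K * linf (z1 - z2)"
    and cost_bounded: "\<And>t x u z. t \<in> {1..T} \<Longrightarrow> z \<in> Iset \<Longrightarrow> \<bar>l t x u z\<bar> \<le> B"
begin

definition lip_chat :: real where
  "lip_chat = real CARD('x) * (B + K)"

definition lip_fhat :: real where
  "lip_fhat = real CARD('x) * (1 + K)"

lemma lip_chat_nonneg: "0 \<le> lip_chat"
  using K_nonneg B_nonneg by (simp add: lip_chat_def)

lemma lip_fhat_nonneg: "0 \<le> lip_fhat"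
  using K_nonneg by (simp add: lip_fhat_def)

lemma chat_lipschitz:
  assumes "t \<in> {1..T}" "z1 \<in> Iset" "z2 \<in> Iset"
  shows "\<bar>chat l t z1 \<gamma> - chat l t z2 \<gamma>\<bar> \<le> lip_chat * linf (z1 - z2)"
  unfolding chat_def lip_chat_def
  by (rule weighted_sum_lipschitz) (use assms cost_bounded cost_lipschitz in auto)

lemma fhat_lipschitz:
  assumes "t \<in> {1..T}" "z1 \<in> Iset" "z2 \<in> Iset"
  shows "linf (fhat f pw t z1 \<gamma> - fhat f pw t z2 \<gamma>) \<le> lip_fhat * linf (z1 - z2)"
proof (rule linf_leI)
  fix y
  have "\<bar>Ptr f pw t x u z y\<bar> \<le> 1" for x u z
    by (simp add: Ptr_eq_prob)
  then have "\<bar>(\<Sum>x\<in>UNIV. z1 x * Ptr f pw t x (\<gamma> x) z1 y) - (\<Sum>x\<in>UNIV. z2 x * Ptr f pw t x (\<gamma> x) z2 y)\<bar>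
      \<le> real CARD('x) * (1 + K) * linf (z1 - z2)"
    by (intro weighted_sum_lipschitz) (use assms Ptr_lipschitz in auto)
  then show "\<bar>(fhat f pw t z1 \<gamma> - fhat f pw t z2 \<gamma>) y\<bar> \<le> lip_fhat * linf (z1 - z2)"
    by (simp add: fhat_def lip_fhat_def)
qed

text \<open>The constants below are indexed by the number of remaining stages.\<close>

definition value_lip :: "nat \<Rightarrow> real" where
  "value_lip = rec_nat 0 (\<lambda>_ L. lip_chat + 2 * lip_fhat * L)"

definition value_err :: "nat \<Rightarrow> real" where
  "value_err = rec_nat 0 (\<lambda>k E. 4 * real CARD('x) * value_lip k + 2 * E)"

definition tracking_err :: "nat \<Rightarrow> real" where
  "tracking_err = rec_nat (2 * real CARD('x)) (\<lambda>_ D. 2 * (real CARD('x) + lip_fhat * D))"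

lemma value_lip_simps [simp]:
  "value_lip 0 = 0" "value_lip (Suc k) = lip_chat + 2 * lip_fhat * value_lip k"
  by (simp_all add: value_lip_def)

lemma value_err_simps [simp]:
  "value_err 0 = 0" "value_err (Suc k) = 4 * real CARD('x) * value_lip k + 2 * value_err k"
  by (simp_all add: value_err_def)

lemma tracking_err_simps [simp]:
  "tracking_err 0 = 2 * real CARD('x)"
  "tracking_err (Suc k) = 2 * (real CARD('x) + lip_fhat * tracking_err k)"
  by (simp_all add: tracking_err_def)

lemma value_lip_nonneg: "0 \<le> value_lip k"
  by (induction k) (simp_all add: lip_chat_nonneg lip_fhat_nonneg)

definition stage_err :: "nat \<Rightarrow> real" where
  "stage_err t = 2 * real CARD('x) * value_lip (T - t) + value_err (T - t)"

definition error_const :: real where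
  "error_const = (\<Sum>t\<le>T. stage_err t) + (\<Sum>t\<in>{1..T}. lip_chat * tracking_err (t - 1))"

end

lemma lipschitz_model_exists:
  fixes pw :: "nat \<Rightarrow> 'w::finite pmf"
    and f :: "nat \<Rightarrow> 'x::finite \<Rightarrow> 'u::finite \<Rightarrow> 'w \<Rightarrow> ('x \<Rightarrow> real) \<Rightarrow> 'x"
    and l :: "nat \<Rightarrow> 'x \<Rightarrow> 'u \<Rightarrow> ('x \<Rightarrow> real) \<Rightarrow> real"
  assumes lip_P: "\<forall>t\<in>{1..T}. \<exists>K1>0. \<forall>x y u. \<forall>z1\<in>Iset. \<forall>z2\<in>Iset.
                 \<bar>Ptr f pw t x u z1 y - Ptr f pw t x u z2 y\<bar> \<le> K1 * linf (z1 - z2)"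
    and lip_l: "\<forall>t\<in>{1..T}. \<exists>K2>0. \<forall>x u. \<forall>z1\<in>Iset. \<forall>z2\<in>Iset.
                 \<bar>l t x u z1 - l t x u z2\<bar> \<le> K2 * linf (z1 - z2)"
  shows "\<exists>K B. lipschitz_model T pw f l K B"
proof -
  have mono: "a \<le> K * linf d \<Longrightarrow> K \<le> K' \<Longrightarrow> a \<le> K' * linf d" for a K K' and d :: "'x \<Rightarrow> real"
    by (meson linf_nonneg mult_right_mono order_trans)
  obtain K1 where K1: "K1 > 0" "\<forall>t\<in>{1..T}. \<forall>x y u. \<forall>z1\<in>Iset. \<forall>z2\<in>Iset.
      \<bar>Ptr f pw t x u z1 y - Ptr f pw t x u z2 y\<bar> \<le> K1 * linf (z1 - z2)"
    using ex_uniform_constant[OF finite_atLeastAtMost lip_P] by (blast intro: mono)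
  obtain K2 where K2: "K2 > 0" "\<forall>t\<in>{1..T}. \<forall>x u. \<forall>z1\<in>Iset. \<forall>z2\<in>Iset.
      \<bar>l t x u z1 - l t x u z2\<bar> \<le> K2 * linf (z1 - z2)"
    using ex_uniform_constant[OF finite_atLeastAtMost lip_l] by (blast intro: mono)
  define K where "K = K1 + K2"
  define B where "B = (\<Sum>(t, x, u)\<in>{1..T} \<times> UNIV \<times> UNIV. \<bar>l t x u (\<lambda>_. 0)\<bar>) + K"
  have K: "0 \<le> K" "K1 \<le> K" "K2 \<le> K"
    using K1 K2 by (simp_all add: K_def)
  have P_lip: "\<bar>Ptr f pw t x u z1 y - Ptr f pw t x u z2 y\<bar> \<le> K * linf (z1 - z2)"
    if "t \<in> {1..T}" "z1 \<in> Iset" "z2 \<in> Iset" for t x y u z1 z2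
    using K1(2) that K(2) by (blast intro: mono)
  have l_lip: "\<bar>l t x u z1 - l t x u z2\<bar> \<le> K * linf (z1 - z2)"
    if "t \<in> {1..T}" "z1 \<in> Iset" "z2 \<in> Iset" for t x u z1 z2
    using K2(2) that K(3) by (blast intro: mono)
  have "\<bar>l t x u z\<bar> \<le> B" if t: "t \<in> {1..T}" and z: "z \<in> Iset" for t x u z
  proof -
    have "\<bar>l t x u (\<lambda>_. 0)\<bar> \<le> (\<Sum>(t, x, u)\<in>{1..T} \<times> UNIV \<times> UNIV. \<bar>l t x u (\<lambda>_. 0)\<bar>)"
      using member_le_sum[of "(t, x, u)" "{1..T} \<times> UNIV \<times> UNIV" "\<lambda>(t, x, u). \<bar>l t x u (\<lambda>_. 0)\<bar>"] t
      by (simp add: case_prod_unfold)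
    then show ?thesis
      using abs_le_of_lipschitz_on_Iset[OF l_lip[OF t, where x=x and u=u] K(1) z] unfolding B_def by linarith
  qed
  moreover have "0 \<le> B"
    unfolding B_def using K(1) by (intro add_nonneg_nonneg sum_nonneg) auto
  ultimately show ?thesis
    using K(1) P_lip l_lip by (intro exI[of _ K] exI[of _ B] lipschitz_model.intro) auto
qed

section \<open>The quantized dynamic program\<close>

lemma abs_diff_le_of_minimizers:
  fixes Fa Fb :: "'g \<Rightarrow> real"
  assumes "\<And>\<gamma>. va \<le> Fa \<gamma>" "va = Fa \<gamma>a" "\<And>\<gamma>. vb \<le> Fb \<gamma>" "vb = Fb \<gamma>b"
    and "\<And>\<gamma>. \<bar>Fa \<gamma> - Fb \<gamma>\<bar> \<le> e"
  shows "\<bar>va - vb\<bar> \<le> e"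
  using assms(1)[of \<gamma>b] assms(3)[of \<gamma>a] assms(2,4) assms(5)[of \<gamma>a] assms(5)[of \<gamma>b]
  by (simp add: abs_le_iff)

locale quantized_dp = lipschitz_model T pw f l K B
  for T pw and f :: "nat \<Rightarrow> 'x::finite \<Rightarrow> 'u::finite \<Rightarrow> 'w::finite \<Rightarrow> ('x \<Rightarrow> real) \<Rightarrow> 'x"
    and l K B +
  fixes p1 :: "'x pmf" and n :: nat and Q :: "('x \<Rightarrow> real) \<Rightarrow> 'x \<Rightarrow> real"
    and V :: "nat \<Rightarrow> ('x \<Rightarrow> real) \<Rightarrow> real" and \<psi> :: "nat \<Rightarrow> ('x \<Rightarrow> real) \<Rightarrow> 'x \<Rightarrow> 'u"
    and zh :: "nat \<Rightarrow> 'x \<Rightarrow> real"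
  assumes n_pos: "n \<ge> 1"
    and Q_in_Qn: "\<And>z. Q z \<in> Qn n"
    and Q_nearest: "\<And>z z'. z' \<in> Qn n \<Longrightarrow> linf (z - Q z) \<le> linf (z - z')"
    and V_final: "\<And>z. z \<in> Qn n \<Longrightarrow> V (T + 1) z = 0"
    and V_Bellman: "\<And>t z. t \<in> {1..T} \<Longrightarrow> z \<in> Qn n \<Longrightarrow>
        V t z = (MIN \<gamma>. chat l t z \<gamma> + V (t + 1) (Q (fhat f pw t z \<gamma>)))"
    and \<psi>_minimizes: "\<And>t z \<gamma>. t \<in> {1..T} \<Longrightarrow> z \<in> Qn n \<Longrightarrow>
        chat l t z (\<psi> t z) + V (t + 1) (Q (fhat f pw t z (\<psi> t z)))
          \<le> chat l t z \<gamma> + V (t + 1) (Q (fhat f pw t z \<gamma>))"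
    and zh_1: "zh 1 = Q (pmf p1)"
    and zh_Suc: "\<And>t. t \<ge> 1 \<Longrightarrow> zh (t + 1) = Q (fhat f pw t (zh t) (\<psi> t (zh t)))"
begin

lemma sqrt_n_pos: "0 < sqrt (real n)"
  using n_pos by simp

lemma linf_Q_le_twice: "m \<in> Qn n \<Longrightarrow> linf (Q z - m) \<le> 2 * linf (z - m)"
  by (rule linf_le_twice_of_nearer[OF Q_nearest])

lemma V_le_Bellman:
  assumes "t \<in> {1..T}" "z \<in> Qn n"
  shows "V t z \<le> chat l t z \<gamma> + V (t + 1) (Q (fhat f pw t z \<gamma>))"
  unfolding V_Bellman[OF assms] by (rule Min_le) auto

lemma V_eq_\<psi>:
  assumes "t \<in> {1..T}" "z \<in> Qn n"
  shows "V t z = chat l t z (\<psi> t z) + V (t + 1) (Q (fhat f pw t z (\<psi> t z)))"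
  unfolding V_Bellman[OF assms] by (rule Min_eqI) (use \<psi>_minimizes[OF assms] in auto)

definition value_estimate :: "nat \<Rightarrow> real \<Rightarrow> real \<Rightarrow> bool" where
  "value_estimate t L E \<longleftrightarrow> (\<forall>a\<in>Qn n. \<forall>xs.
     \<bar>V t a - V t (mfield n xs)\<bar> \<le> L * linf (a - mfield n xs) + E / sqrt (real n))"

lemma value_estimateD:
  assumes "value_estimate t L E" "a \<in> Qn n"
  shows "\<bar>V t a - V t (mfield n xs)\<bar> \<le> L * linf (a - mfield n xs) + E / sqrt (real n)"
  using assms unfolding value_estimate_def by blast

lemma value_estimate_final: "value_estimate (T + 1) 0 0"
  using V_final mfield_in_Qn by (auto simp: value_estimate_def)

text \<open>Both quantized predictions are compared with an empirical mean field close to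
  \<open>fhat f pw t (mfield n xs) \<gamma>\<close>, which exists because the expected distance is small.\<close>

lemma abs_V_Q_fhat_diff_le:
  assumes t: "t \<in> {1..T}" and L: "0 \<le> L" and est: "value_estimate (t + 1) L E"
    and a: "a \<in> Qn n"
  shows "\<bar>V (t + 1) (Q (fhat f pw t a \<gamma>)) - V (t + 1) (Q (fhat f pw t (mfield n xs) \<gamma>))\<bar>
    \<le> 2 * lip_fhat * L * linf (a - mfield n xs) + (4 * real CARD('x) * L + 2 * E) / sqrt (real n)"
proof -
  define d where "d = linf (a - mfield n xs)"
  define \<delta> where "\<delta> = real CARD('x) / sqrt (real n)"
  define wa where "wa = fhat f pw t a \<gamma>"
  define wb where "wb = fhat f pw t (mfield n xs) \<gamma>"
  obtain xs' where xs': "linf (mfield n xs' - wb) \<le> \<delta>"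
    using exists_mfield_near_fhat unfolding wb_def \<delta>_def by blast
  let ?m = "mfield n xs'"
  have V_near: "\<bar>V (t + 1) (Q w) - V (t + 1) ?m\<bar> \<le> L * linf (Q w - ?m) + E / sqrt (real n)" for w
    by (rule value_estimateD[OF est Q_in_Qn])
  have "linf (wa - wb) \<le> lip_fhat * d"
    unfolding wa_def wb_def d_def by (rule fhat_lipschitz[OF t Qn_in_Iset[OF a] mfield_in_Iset])
  then have "linf (wa - ?m) \<le> lip_fhat * d + \<delta>"
    using linf_triangle[of wa ?m wb] linf_minus_commute[of wb ?m] xs' by linarith
  then have "linf (Q wa - ?m) \<le> 2 * lip_fhat * d + 2 * \<delta>"
    using linf_Q_le_twice[OF mfield_in_Qn[of n xs'], of wa] by linarith
  then have a_near: "L * linf (Q wa - ?m) \<le> L * (2 * lip_fhat * d + 2 * \<delta>)"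
    by (rule mult_left_mono[OF _ L])
  have "linf (Q wb - ?m) \<le> 2 * \<delta>"
    using linf_Q_le_twice[OF mfield_in_Qn[of n xs'], of wb] linf_minus_commute[of wb ?m] xs' by linarith
  then have b_near: "L * linf (Q wb - ?m) \<le> L * (2 * \<delta>)"
    by (rule mult_left_mono[OF _ L])
  have "\<bar>V (t + 1) (Q wa) - V (t + 1) (Q wb)\<bar>
      \<le> L * (2 * lip_fhat * d + 2 * \<delta>) + L * (2 * \<delta>) + 2 * (E / sqrt (real n))"
    using V_near[of wa] V_near[of wb] a_near b_near by linarith
  also have "\<dots> = 2 * lip_fhat * L * d + (4 * real CARD('x) * L + 2 * E) / sqrt (real n)"
    by (simp add: \<delta>_def algebra_simps add_divide_distrib)
  finally show ?thesis
    by (simp add: wa_def wb_def d_def)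
qed

lemma value_estimate_step:
  assumes t: "t \<in> {1..T}" and L: "0 \<le> L" and est: "value_estimate (t + 1) L E"
  shows "value_estimate t (lip_chat + 2 * lip_fhat * L) (4 * real CARD('x) * L + 2 * E)"
  unfolding value_estimate_def
proof (intro ballI allI)
  fix a :: "'x \<Rightarrow> real" and xs :: "nat \<Rightarrow> 'x" assume a: "a \<in> Qn n"
  let ?m = "mfield n xs"
  let ?F = "\<lambda>z \<gamma>. chat l t z \<gamma> + V (t + 1) (Q (fhat f pw t z \<gamma>))"
  have F_diff: "\<bar>?F a \<gamma> - ?F ?m \<gamma>\<bar> \<le> (lip_chat + 2 * lip_fhat * L) * linf (a - ?m)
      + (4 * real CARD('x) * L + 2 * E) / sqrt (real n)" for \<gamma>
    using chat_lipschitz[OF t Qn_in_Iset[OF a] mfield_in_Iset[of n xs], of \<gamma>] abs_V_Q_fhat_diff_le[OF t L est a, of \<gamma> xs]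
    by (simp add: algebra_simps abs_le_iff)
  show "\<bar>V t a - V t ?m\<bar> \<le> (lip_chat + 2 * lip_fhat * L) * linf (a - ?m)
      + (4 * real CARD('x) * L + 2 * E) / sqrt (real n)"
    by (rule abs_diff_le_of_minimizers[where Fa="?F a" and Fb="?F ?m", OF V_le_Bellman[OF t a]
          V_eq_\<psi>[OF t a] V_le_Bellman[OF t mfield_in_Qn] V_eq_\<psi>[OF t mfield_in_Qn] F_diff])
qed

lemma value_estimate_holds:
  assumes "t \<in> {1..T + 1}"
  shows "value_estimate t (value_lip (T + 1 - t)) (value_err (T + 1 - t))"
proof -
  have "value_estimate (T + 1 - k) (value_lip k) (value_err k)" if "k \<le> T" for k
    using that
  proof (induction k)
    case 0
    then show ?case
      using value_estimate_final by simp
  next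
    case (Suc k)
    then have "T - k \<in> {1..T}" "T - k + 1 = T + 1 - k"
      by auto
    then show ?case
      using value_estimate_step[of "T - k" "value_lip k" "value_err k"] Suc value_lip_nonneg
      by (simp add: Suc_diff_le)
  qed
  moreover have "T + 1 - t \<le> T" "T + 1 - (T + 1 - t) = t"
    using assms by auto
  ultimately show ?thesis
    by metis
qed

section \<open>Lower bound\<close>

lemma V_Q_le_expectation:
  fixes X :: "'a \<Rightarrow> nat \<Rightarrow> 'x"
  assumes est: "value_estimate t L E" and L: "0 \<le> L" and fin: "finite (set_pmf p)"
    and dev: "measure_pmf.expectation p (\<lambda>y. linf (mfield n (X y) - z)) \<le> \<delta>"
  shows "V t (Q z) \<le> measure_pmf.expectation p (\<lambda>y. V t (mfield n (X y))) + 2 * L * \<delta> + E / sqrt (real n)"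
proof -
  have scaled: "L * linf (Q z - mfield n (X y)) \<le> 2 * L * linf (mfield n (X y) - z)" for y
    using mult_left_mono[OF linf_Q_le_twice[OF mfield_in_Qn[of n "X y"], of z] L] linf_minus_commute[of z "mfield n (X y)"]
    by simp
  have "V t (Q z) \<le> V t (mfield n (X y)) + 2 * L * linf (mfield n (X y) - z) + E / sqrt (real n)" for y
    using value_estimateD[OF est Q_in_Qn, of z "X y"] scaled[of y] by linarith
  then have "V t (Q z) \<le> measure_pmf.expectation p
      (\<lambda>y. V t (mfield n (X y)) + 2 * L * linf (mfield n (X y) - z) + E / sqrt (real n))"
    by (intro measure_pmf.integral_ge_const integrable_measure_pmf_finite fin AE_pmfI)
  also have "\<dots> = measure_pmf.expectation p (\<lambda>y. V t (mfield n (X y)))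
      + 2 * L * measure_pmf.expectation p (\<lambda>y. linf (mfield n (X y) - z)) + E / sqrt (real n)"
    by (simp add: integrable_measure_pmf_finite fin)
  also have "\<dots> \<le> measure_pmf.expectation p (\<lambda>y. V t (mfield n (X y))) + 2 * L * \<delta> + E / sqrt (real n)"
    using mult_left_mono[OF dev, of "2 * L"] L by simp
  finally show ?thesis .
qed

lemma V_le_expectation_next:
  assumes t: "t \<in> {1..T}"
  shows "V t (mfield n xs) \<le> chat l t (mfield n xs) \<gamma>
    + measure_pmf.expectation (noise n pw t) (\<lambda>ws. V (t + 1) (mfield n (next_state n f t \<gamma> xs ws)))
    + stage_err t / sqrt (real n)"
proof -
  have "V (t + 1) (Q (fhat f pw t (mfield n xs) \<gamma>))
      \<le> measure_pmf.expectation (noise n pw t) (\<lambda>ws. V (t + 1) (mfield n (next_state n f t \<gamma> xs ws)))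
        + 2 * value_lip (T - t) * (real CARD('x) / sqrt (real n)) + value_err (T - t) / sqrt (real n)"
    using value_estimate_holds[of "t + 1"] t
    by (intro V_Q_le_expectation value_lip_nonneg finite_set_pmf_Pi_pmf expectation_linf_next_state_deviation)
      simp_all
  moreover have "2 * value_lip (T - t) * (real CARD('x) / sqrt (real n)) + value_err (T - t) / sqrt (real n)
      = stage_err t / sqrt (real n)"
    using sqrt_n_pos by (simp add: stage_err_def field_simps)
  ultimately show ?thesis
    using V_le_Bellman[OF t mfield_in_Qn, of xs \<gamma>] by linarith
qed

lemma V_1_zh_le_expectation:
  "V 1 (zh 1) \<le> measure_pmf.expectation (sdist n p1 pw f g 0) (\<lambda>xs. V 1 (mfield n xs))
    + stage_err 0 / sqrt (real n)"
proof -
  have "V 1 (Q (pmf p1))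
      \<le> measure_pmf.expectation (sdist n p1 pw f g 0) (\<lambda>xs. V 1 (mfield n xs))
        + 2 * value_lip T * (real CARD('x) / sqrt (real n)) + value_err T / sqrt (real n)"
    using value_estimate_holds[of 1] expectation_linf_initial_deviation[OF n_pos, of p1]
    by (intro V_Q_le_expectation[where X=id, simplified] value_lip_nonneg finite_set_pmf_sdist) simp_all
  moreover have "2 * value_lip T * (real CARD('x) / sqrt (real n)) + value_err T / sqrt (real n)
      = stage_err 0 / sqrt (real n)"
    using sqrt_n_pos by (simp add: stage_err_def field_simps)
  ultimately show ?thesis
    unfolding zh_1 by linarith
qed

lemma expectation_V_le_step:
  assumes t: "t \<in> {1..T}"
  shows "measure_pmf.expectation (sdist n p1 pw f g (t - 1)) (\<lambda>xs. V t (mfield n xs))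
    \<le> measure_pmf.expectation (sdist n p1 pw f g (t - 1)) (\<lambda>xs. chat l t (mfield n xs) (\<lambda>x. g t x (mfield n xs)))
      + measure_pmf.expectation (sdist n p1 pw f g t) (\<lambda>xs. V (t + 1) (mfield n xs))
      + stage_err t / sqrt (real n)"
proof -
  obtain k where k: "t = Suc k"
    using t by (cases t) auto
  let ?P = "sdist n p1 pw f g k"
  have "measure_pmf.expectation ?P (\<lambda>xs. V t (mfield n xs))
      \<le> measure_pmf.expectation ?P (\<lambda>xs. chat l t (mfield n xs) (\<lambda>x. g t x (mfield n xs))
          + measure_pmf.expectation (noise n pw t) (\<lambda>ws. V (t + 1)
              (mfield n (next_state n f t (\<lambda>x. g t x (mfield n xs)) xs ws)))
          + stage_err t / sqrt (real n))"
    by (intro expectation_mono_finite finite_set_pmf_sdist V_le_expectation_next[OF t])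
  also have "\<dots> = measure_pmf.expectation ?P (\<lambda>xs. chat l t (mfield n xs) (\<lambda>x. g t x (mfield n xs)))
      + measure_pmf.expectation (sdist n p1 pw f g t) (\<lambda>xs. V (t + 1) (mfield n xs))
      + stage_err t / sqrt (real n)"
    by (simp add: k expectation_sdist_Suc integrable_measure_pmf_finite finite_set_pmf_sdist
        del: sdist.simps(2))
  finally show ?thesis
    by (simp add: k)
qed

lemma expectation_V_1_le_sum:
  assumes "j \<le> T"
  shows "measure_pmf.expectation (sdist n p1 pw f g 0) (\<lambda>xs. V 1 (mfield n xs))
    \<le> (\<Sum>t\<in>{1..j}. measure_pmf.expectation (sdist n p1 pw f g (t - 1))
          (\<lambda>xs. chat l t (mfield n xs) (\<lambda>x. g t x (mfield n xs))) + stage_err t / sqrt (real n))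
      + measure_pmf.expectation (sdist n p1 pw f g j) (\<lambda>xs. V (j + 1) (mfield n xs))"
  using assms
proof (induction j)
  case 0
  then show ?case
    by simp
next
  case (Suc j)
  then show ?case
    using expectation_V_le_step[of "Suc j" g] by simp
qed

lemma V_1_le_Jcost:
  "V 1 (zh 1) \<le> Jcost T n p1 pw f l g + (\<Sum>t\<le>T. stage_err t) / sqrt (real n)"
proof -
  have "measure_pmf.expectation (sdist n p1 pw f g T) (\<lambda>xs. V (T + 1) (mfield n xs)) = 0"
    by (simp add: V_final[simplified] mfield_in_Qn)
  then have "measure_pmf.expectation (sdist n p1 pw f g 0) (\<lambda>xs. V 1 (mfield n xs))
      \<le> Jcost T n p1 pw f l g + (\<Sum>t\<in>{1..T}. stage_err t) / sqrt (real n)"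
    using expectation_V_1_le_sum[of T g]
    by (simp add: Jcost_eq_sum_chat sum.distrib sum_divide_distrib)
  moreover have "(\<Sum>t\<le>T. stage_err t) = stage_err 0 + (\<Sum>t\<in>{1..T}. stage_err t)"
    by (simp add: atMost_atLeast0 sum.atLeast_Suc_atMost)
  ultimately show ?thesis
    using V_1_zh_le_expectation[of g] by (simp add: add_divide_distrib)
qed

section \<open>Upper bound\<close>

abbreviation psi_strategy :: "nat \<Rightarrow> 'x \<Rightarrow> ('x \<Rightarrow> real) \<Rightarrow> 'u" where
  "psi_strategy \<equiv> \<lambda>t x m. \<psi> t (zh t) x"

lemma zh_in_Qn:
  assumes "t \<ge> 1"
  shows "zh t \<in> Qn n"
proof (cases "t = 1")
  case True
  then show ?thesis
    using zh_1 Q_in_Qn by metis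
next
  case False
  then have "zh t = Q (fhat f pw (t - 1) (zh (t - 1)) (\<psi> (t - 1) (zh (t - 1))))"
    using zh_Suc[of "t - 1"] assms by simp
  then show ?thesis
    by (simp add: Q_in_Qn)
qed

lemma V_1_eq_sum_chat_zh:
  assumes "j \<le> T"
  shows "V 1 (zh 1) = (\<Sum>t\<in>{1..j}. chat l t (zh t) (\<psi> t (zh t))) + V (j + 1) (zh (j + 1))"
  using assms
proof (induction j)
  case 0
  then show ?case
    by simp
next
  case (Suc j)
  have "V (Suc j) (zh (Suc j)) = chat l (Suc j) (zh (Suc j)) (\<psi> (Suc j) (zh (Suc j))) + V (Suc j + 1) (zh (Suc j + 1))"
    using V_eq_\<psi>[of "Suc j" "zh (Suc j)"] zh_in_Qn[of "Suc j"] zh_Suc[of "Suc j"] Suc.prems by simp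
  then show ?case
    using Suc by simp
qed

lemma linf_next_mfield_zh_le:
  assumes t: "t \<in> {1..T}"
  defines "\<gamma> \<equiv> \<psi> t (zh t)"
  shows "linf (mfield n (next_state n f t \<gamma> xs ws) - zh (t + 1))
    \<le> 2 * lip_fhat * linf (mfield n xs - zh t)
      + 2 * linf (mfield n (next_state n f t \<gamma> xs ws) - fhat f pw t (mfield n xs) \<gamma>)"
proof -
  let ?m' = "mfield n (next_state n f t \<gamma> xs ws)"
  let ?w = "fhat f pw t (zh t) \<gamma>"
  let ?v = "fhat f pw t (mfield n xs) \<gamma>"
  have "linf (?m' - zh (t + 1)) \<le> 2 * linf (?w - ?m')"
    using zh_Suc[of t] t linf_Q_le_twice[OF mfield_in_Qn, of ?w] linf_minus_commute[of ?m' "Q ?w"]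
    by (simp add: \<gamma>_def)
  moreover have "linf (?w - ?m') \<le> linf (?w - ?v) + linf (?v - ?m')"
    by (rule linf_triangle)
  moreover have "linf (?w - ?v) \<le> lip_fhat * linf (mfield n xs - zh t)"
  proof -
    have "zh t \<in> Iset"
      using t by (intro Qn_in_Iset[of _ n] zh_in_Qn) simp
    then have "linf (?w - ?v) \<le> lip_fhat * linf (zh t - mfield n xs)"
      by (rule fhat_lipschitz[OF t _ mfield_in_Iset])
    then show ?thesis
      using linf_minus_commute[of "zh t" "mfield n xs"] by simp
  qed
  ultimately show ?thesis
    using linf_minus_commute[of ?v ?m'] by linarith
qed

lemma expectation_noise_tracking_step:
  assumes t: "t \<in> {1..T}"
  shows "measure_pmf.expectation (noise n pw t)
      (\<lambda>ws. linf (mfield n (next_state n f t (\<psi> t (zh t)) xs ws) - zh (t + 1)))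
    \<le> 2 * (real CARD('x) / sqrt (real n)) + 2 * lip_fhat * linf (mfield n xs - zh t)"
proof -
  let ?dev = "\<lambda>ws. linf (mfield n (next_state n f t (\<psi> t (zh t)) xs ws) - fhat f pw t (mfield n xs) (\<psi> t (zh t)))"
  have "measure_pmf.expectation (noise n pw t)
      (\<lambda>ws. linf (mfield n (next_state n f t (\<psi> t (zh t)) xs ws) - zh (t + 1)))
    \<le> measure_pmf.expectation (noise n pw t) (\<lambda>ws. 2 * lip_fhat * linf (mfield n xs - zh t) + 2 * ?dev ws)"
    by (intro expectation_mono_finite finite_set_pmf_Pi_pmf linf_next_mfield_zh_le[OF t]) simp
  also have "\<dots> = 2 * lip_fhat * linf (mfield n xs - zh t) + 2 * measure_pmf.expectation (noise n pw t) ?dev"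
    by (intro expectation_affine_finite finite_set_pmf_Pi_pmf) simp
  also have "\<dots> \<le> 2 * (real CARD('x) / sqrt (real n)) + 2 * lip_fhat * linf (mfield n xs - zh t)"
    using expectation_linf_next_state_deviation[of n pw t f "\<psi> t (zh t)" xs] by linarith
  finally show ?thesis .
qed

lemma expectation_tracking_error:
  assumes "k < T"
  shows "measure_pmf.expectation (sdist n p1 pw f psi_strategy k) (\<lambda>xs. linf (mfield n xs - zh (Suc k)))
    \<le> tracking_err k / sqrt (real n)"
  using assms
proof (induction k)
  case 0
  have "zh (Suc 0) = Q (pmf p1)"
    using zh_1 by simp
  then have "linf (mfield n xs - zh (Suc 0)) \<le> 2 * linf (mfield n xs - pmf p1)" for xs
    using linf_Q_le_twice[OF mfield_in_Qn[of n xs], of "pmf p1"] linf_minus_commute[of "zh (Suc 0)" "mfield n xs"]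
      linf_minus_commute[of "pmf p1" "mfield n xs"] by simp
  then have "measure_pmf.expectation (sdist n p1 pw f psi_strategy 0) (\<lambda>xs. linf (mfield n xs - zh (Suc 0)))
      \<le> measure_pmf.expectation (sdist n p1 pw f psi_strategy 0) (\<lambda>xs. 2 * linf (mfield n xs - pmf p1))"
    by (rule expectation_mono_finite[OF finite_set_pmf_sdist])
  also have "\<dots> = 2 * measure_pmf.expectation (sdist n p1 pw f psi_strategy 0) (\<lambda>xs. linf (mfield n xs - pmf p1))"
    by (rule integral_mult_right_zero)
  also have "\<dots> \<le> tracking_err 0 / sqrt (real n)"
    using expectation_linf_initial_deviation[OF n_pos, of p1] by simp
  finally show ?case .
next
  case (Suc k)
  let ?P = "sdist n p1 pw f psi_strategy k"
  have "measure_pmf.expectation (sdist n p1 pw f psi_strategy (Suc k))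
      (\<lambda>xs. linf (mfield n xs - zh (Suc (Suc k))))
    \<le> measure_pmf.expectation ?P (\<lambda>xs. 2 * (real CARD('x) / sqrt (real n))
        + 2 * lip_fhat * linf (mfield n xs - zh (Suc k)))"
    using expectation_noise_tracking_step[of "Suc k"] Suc.prems
    by (intro expectation_sdist_Suc_le) simp
  also have "\<dots> = 2 * (real CARD('x) / sqrt (real n))
      + 2 * lip_fhat * measure_pmf.expectation ?P (\<lambda>xs. linf (mfield n xs - zh (Suc k)))"
    by (rule expectation_affine_finite[OF finite_set_pmf_sdist])
  also have "\<dots> \<le> 2 * (real CARD('x) / sqrt (real n)) + 2 * lip_fhat * (tracking_err k / sqrt (real n))"
    using mult_left_mono[OF Suc.IH[OF Suc_lessD[OF Suc.prems]], of "2 * lip_fhat"] lip_fhat_nonneg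
    by linarith
  also have "\<dots> = tracking_err (Suc k) / sqrt (real n)"
    by (simp add: add_divide_distrib algebra_simps)
  finally show ?case .
qed

lemma expectation_chat_psi_le:
  assumes t: "t \<in> {1..T}"
  shows "measure_pmf.expectation (sdist n p1 pw f psi_strategy (t - 1)) (\<lambda>xs. chat l t (mfield n xs) (\<psi> t (zh t)))
    \<le> chat l t (zh t) (\<psi> t (zh t)) + lip_chat * tracking_err (t - 1) / sqrt (real n)"
proof -
  let ?P = "sdist n p1 pw f psi_strategy (t - 1)"
  have "chat l t (mfield n xs) (\<psi> t (zh t)) \<le> chat l t (zh t) (\<psi> t (zh t)) + lip_chat * linf (mfield n xs - zh t)" for xs
    using chat_lipschitz[OF t mfield_in_Iset[of n xs] Qn_in_Iset[OF zh_in_Qn[of t]], of "\<psi> t (zh t)"] t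
    by (simp add: abs_le_iff)
  then have "measure_pmf.expectation ?P (\<lambda>xs. chat l t (mfield n xs) (\<psi> t (zh t)))
      \<le> measure_pmf.expectation ?P (\<lambda>xs. chat l t (zh t) (\<psi> t (zh t)) + lip_chat * linf (mfield n xs - zh t))"
    by (rule expectation_mono_finite[OF finite_set_pmf_sdist])
  also have "\<dots> = chat l t (zh t) (\<psi> t (zh t)) + lip_chat * measure_pmf.expectation ?P (\<lambda>xs. linf (mfield n xs - zh t))"
    by (rule expectation_affine_finite[OF finite_set_pmf_sdist])
  also have "\<dots> \<le> chat l t (zh t) (\<psi> t (zh t)) + lip_chat * (tracking_err (t - 1) / sqrt (real n))"
  proof -
    have "t - 1 < T" "Suc (t - 1) = t"
      using t by auto
    then show ?thesis
      using mult_left_mono[OF expectation_tracking_error[OF \<open>t - 1 < T\<close>] lip_chat_nonneg] by simp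
  qed
  finally show ?thesis
    by simp
qed

lemma Jcost_psi_le_V_1:
  "Jcost T n p1 pw f l psi_strategy
    \<le> V 1 (zh 1) + (\<Sum>t\<in>{1..T}. lip_chat * tracking_err (t - 1)) / sqrt (real n)"
proof -
  have "Jcost T n p1 pw f l psi_strategy
      \<le> (\<Sum>t\<in>{1..T}. chat l t (zh t) (\<psi> t (zh t)) + lip_chat * tracking_err (t - 1) / sqrt (real n))"
    unfolding Jcost_eq_sum_chat by (intro sum_mono expectation_chat_psi_le)
  also have "\<dots> = V 1 (zh 1) + (\<Sum>t\<in>{1..T}. lip_chat * tracking_err (t - 1)) / sqrt (real n)"
  proof -
    have "V (T + 1) (zh (T + 1)) = 0"
      by (rule V_final[OF zh_in_Qn]) simp
    then have "V 1 (zh 1) = (\<Sum>t\<in>{1..T}. chat l t (zh t) (\<psi> t (zh t)))"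
      using V_1_eq_sum_chat_zh[OF order_refl] by linarith
    then show ?thesis
      by (simp only: sum.distrib sum_divide_distrib times_divide_eq_right)
  qed
  finally show ?thesis .
qed

theorem abs_Jcost_psi_minus_Jstar_le:
  assumes "\<And>t x u z. 0 \<le> l t x u z"
  shows "\<bar>Jcost T n p1 pw f l psi_strategy - Jstar T n p1 pw f l\<bar> \<le> error_const / sqrt (real n)"
proof -
  have "V 1 (zh 1) - (\<Sum>t\<le>T. stage_err t) / sqrt (real n) \<le> Jstar T n p1 pw f l"
    using V_1_le_Jcost by (intro le_Jstar) (simp add: algebra_simps)
  moreover have "Jstar T n p1 pw f l \<le> Jcost T n p1 pw f l psi_strategy"
    by (rule Jstar_le_Jcost[OF assms])
  ultimately show ?thesis
    using Jcost_psi_le_V_1 unfolding error_const_def by (simp only: abs_le_iff add_divide_distrib) linarith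
qed

end

theorem corollary1:
  fixes T :: nat
    and p1 :: "'x::finite pmf"
    and pw :: "nat \<Rightarrow> 'w::finite pmf"
    and f :: "nat \<Rightarrow> 'x \<Rightarrow> 'u::finite \<Rightarrow> 'w \<Rightarrow> ('x \<Rightarrow> real) \<Rightarrow> 'x"
    and l :: "nat \<Rightarrow> 'x \<Rightarrow> 'u \<Rightarrow> ('x \<Rightarrow> real) \<Rightarrow> real"
  assumes cost_nonneg: "\<And>t x u z. 0 \<le> l t x u z"
    and lip_P: "\<forall>t\<in>{1..T}. \<exists>K1>0. \<forall>x y u. \<forall>z1\<in>Iset. \<forall>z2\<in>Iset.
                 \<bar>Ptr f pw t x u z1 y - Ptr f pw t x u z2 y\<bar> \<le> K1 * linf (z1 - z2)"
    and lip_l: "\<forall>t\<in>{1..T}. \<exists>K2>0. \<forall>x u. \<forall>z1\<in>Iset. \<forall>z2\<in>Iset.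
                 \<bar>l t x u z1 - l t x u z2\<bar> \<le> K2 * linf (z1 - z2)"
  shows "\<exists>C. \<forall>n::nat. n \<ge> 1 \<longrightarrow>
     (\<forall>(Q :: ('x \<Rightarrow> real) \<Rightarrow> ('x \<Rightarrow> real)) (V :: nat \<Rightarrow> ('x \<Rightarrow> real) \<Rightarrow> real)
        (\<psi> :: nat \<Rightarrow> ('x \<Rightarrow> real) \<Rightarrow> ('x \<Rightarrow> 'u)) (zh :: nat \<Rightarrow> ('x \<Rightarrow> real)).
        (\<forall>z. Q z \<in> Qn n \<and> (\<forall>z'\<in>Qn n. linf (z - Q z) \<le> linf (z - z'))) \<and>
        (\<forall>z\<in>Qn n. V (T + 1) z = 0) \<and>
        (\<forall>t\<in>{1..T}. \<forall>z\<in>Qn n.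
            V t z = (MIN \<gamma>. chat l t z \<gamma> + V (t + 1) (Q (fhat f pw t z \<gamma>)))) \<and>
        (\<forall>t\<in>{1..T}. \<forall>z\<in>Qn n. \<forall>\<gamma>.
            chat l t z (\<psi> t z) + V (t + 1) (Q (fhat f pw t z (\<psi> t z)))
              \<le> chat l t z \<gamma> + V (t + 1) (Q (fhat f pw t z \<gamma>))) \<and>
        zh 1 = Q (pmf p1) \<and>
        (\<forall>t\<ge>1. zh (t + 1) = Q (fhat f pw t (zh t) (\<psi> t (zh t))))
      \<longrightarrow> \<bar>Jcost T n p1 pw f l (\<lambda>t x m. \<psi> t (zh t) x) - Jstar T n p1 pw f l\<bar>
            \<le> C / sqrt (real n))"
proof -
  obtain K B where "lipschitz_model T pw f l K B"
    using lipschitz_model_exists[OF lip_P lip_l] by blast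
  then interpret lipschitz_model T pw f l K B .
  show ?thesis
  proof (intro exI[of _ error_const] allI impI, goal_cases)
    case (1 n Q V \<psi> zh)
    then interpret quantized_dp T pw f l K B p1 n Q V \<psi> zh
      by (intro quantized_dp.intro lipschitz_model_axioms quantized_dp_axioms.intro) auto
    show ?case
      by (rule abs_Jcost_psi_minus_Jstar_le[OF cost_nonneg])
  qed
qed

end
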